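(* Let $f$ be a probability density on $\mathbb{R}$ and let ${\bf X}_{\text{PROS}}=\{X_{[d_j]i}: j=1,\dots,n;\ i=1,\dots,L\}$ be a $\text{PROS}_{\boldsymbol{\alpha}}(n,L,s,D)$ sample of size $N=nL$ from $f$ (as defined in the context). Let $h$ be a real function with $\mu_h=\mathbb{E}[h(X)]$, $X\sim f$, and assume the required moments of $h(X)$ exist. Define $$\hat{\mu}_{h.\text{PROS}}=\frac{1}{N}\sum_{i=1}^L\sum_{j=1}^n h(X_{[d_j]i}).$$ Then: (i) $\mathbb{E}(\hat{\mu}_{h.\text{PROS}})=\mu_h$; (ii) $\mathrm{var}(\hat{\mu}_{h.\text{PROS}})\le \mathrm{var}(\hat{\mu}_{h.\text{SRS}})$, where $\hat{\mu}_{h.\text{SRS}}=\frac1N\sum_{k=1}^N h(X_k)$ with $X_1,\dots,X_N$ i.i.d. with density $f$; (iii) $\hat{\mu}_{h.\text{PROS}}$ is asymptotically normally distributed with mean $\mu_h$ and variance $\mathrm{var}(\hat{\mu}_{h.\text{PROS}})$ as $L\to\infty$; (iv) $\hat{\mu}_{h.\text{PROS}}$ is a strongly consistent estimator of $\mu_h$ as $L\to\infty$.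
   Context: Let $f$ be a density with cdf $F$. Fix positive integers $s,n,L$ with $m=s/n$ an integer, and the design parameter $D=\{d_1,\dots,d_n\}$ with $d_j=\{(j-1)m+1,\dots,jm\}$. Let $\boldsymbol{\alpha}=(\alpha_{d_j,d_h})_{j,h=1}^n$ be a doubly stochastic matrix of misplacement probabilities ($\alpha_{d_j,d_h}$ is the probability that a unit from subset $d_h$ is placed in subset $d_j$; rows and columns sum to 1). For $u=1,\dots,s$, $f_{(u:s)}(x)=\frac{s!}{(u-1)!(s-u)!}F(x)^{u-1}(1-F(x))^{s-u}f(x)$ is the density of the $u$-th order statistic of $s$ i.i.d. draws from $f$. A $\text{PROS}_{\boldsymbol{\alpha}}(n,L,s,D)$ sample (partially rank-ordered set sample: in each of $L$ cycles and for each $j$, $s$ units are drawn, judgment-partitioned into ordered subsets $d_1,\dots,d_n$ with subsetting errors governed by $\boldsymbol\alpha$, and one unit drawn at random from subset $d_j$ is measured) is a family of independent random variables $X_{[d_j]i}$, $j=1,\dots,n$, $i=1,\dots,L$, where $X_{[d_j]i}$ has density $f_{[d_j]}(x)=\frac1m\sum_{h=1}^n\sum_{u\in d_h}\alpha_{d_j,d_h}f_{(u:s)}(x)$. *)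

theory Defs
  imports "HOL-Probability.Probability"
begin

definition cdf_of :: "(real \<Rightarrow> real) \<Rightarrow> real \<Rightarrow> real" where
  "cdf_of f x = measure (density lborel (\<lambda>t. ennreal (f t))) {..x}"

text \<open>density of the u-th order statistic of s i.i.d. draws from f\<close>
definition os_density :: "(real \<Rightarrow> real) \<Rightarrow> nat \<Rightarrow> nat \<Rightarrow> real \<Rightarrow> real" where
  "os_density f s u x =
     fact s / (fact (u - 1) * fact (s - u)) * cdf_of f x ^ (u - 1) * (1 - cdf_of f x) ^ (s - u) * f x"

definition pros_subset :: "nat \<Rightarrow> nat \<Rightarrow> nat \<Rightarrow> nat set" where
  "pros_subset s n j = {(j - 1) * (s div n) + 1 .. j * (s div n)}"

definition doubly_stochastic :: "nat \<Rightarrow> (nat \<Rightarrow> nat \<Rightarrow> real) \<Rightarrow> bool" where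
  "doubly_stochastic n \<alpha> \<longleftrightarrow>
     (\<forall>j\<in>{1..n}. \<forall>h\<in>{1..n}. 0 \<le> \<alpha> j h) \<and>
     (\<forall>j\<in>{1..n}. (\<Sum>h=1..n. \<alpha> j h) = 1) \<and>
     (\<forall>h\<in>{1..n}. (\<Sum>j=1..n. \<alpha> j h) = 1)"

text \<open>density f_[d_j] of a PROS observation from judgment subset d_j
  (alpha j h = probability that a unit from d_h is placed in d_j)\<close>
definition pros_density ::
  "(real \<Rightarrow> real) \<Rightarrow> nat \<Rightarrow> nat \<Rightarrow> (nat \<Rightarrow> nat \<Rightarrow> real) \<Rightarrow> nat \<Rightarrow> real \<Rightarrow> real" where
  "pros_density f s n \<alpha> j x =
     (1 / real (s div n)) * (\<Sum>h=1..n. \<Sum>u\<in>pros_subset s n h. \<alpha> j h * os_density f s u x)"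

definition pros_est ::
  "nat \<Rightarrow> (real \<Rightarrow> real) \<Rightarrow> (nat \<Rightarrow> nat \<Rightarrow> 'a \<Rightarrow> real) \<Rightarrow> nat \<Rightarrow> 'a \<Rightarrow> real" where
  "pros_est n h X L \<omega> = (\<Sum>i=1..L. \<Sum>j=1..n. h (X j i \<omega>)) / real (n * L)"

definition rv_mean :: "'a measure \<Rightarrow> ('a \<Rightarrow> real) \<Rightarrow> real" where
  "rv_mean M Y = (\<integral>\<omega>. Y \<omega> \<partial>M)"

definition rv_var :: "'a measure \<Rightarrow> ('a \<Rightarrow> real) \<Rightarrow> real" where
  "rv_var M Y = (\<integral>\<omega>. (Y \<omega> - rv_mean M Y)\<^sup>2 \<partial>M)"

end

theory Submission
  imports Defs "HOL-Library.Discrete_Functions"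
begin

text \<open>Let Z_i be the total of h over the n observations of cycle i, so that the estimator is
  (Z_1 + ... + Z_L) / (n L). The cycles are independent and identically distributed. Because the
  misplacement matrix is doubly stochastic and the densities of the s order statistics add up to
  s f, the judgment-subset densities f_[d_j] average to f. Hence E Z_i = n mu_h, and var Z_i, the sum
  of the within-subset variances, is n var h(X) minus the spread of the subset means around mu_h
  (law of total variance). This gives (i) and (ii); (iii) is the central limit theorem for the Z_i,
  and (iv) is the strong law of large numbers, proved here for uncorrelated variables of bounded
  variance by Chebyshev's inequality and Borel-Cantelli along the squares. The normalisation in
  (iii) needs var Z_i > 0: a subset that receives the first order statistic has a density that is
  positive wherever f is, outside a null set, so h cannot be constant on it unless it is constant
  under f.\<close>

section \<open>Second moments of sums\<close>

lemma integrable_mult_of_square_integrable: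
  fixes U V :: "'a \<Rightarrow> real"
  assumes [measurable]: "U \<in> borel_measurable M" "V \<in> borel_measurable M"
    and "integrable M (\<lambda>x. (U x)\<^sup>2)" "integrable M (\<lambda>x. (V x)\<^sup>2)"
  shows "integrable M (\<lambda>x. U x * V x)"
proof (rule Bochner_Integration.integrable_bound)
  show "integrable M (\<lambda>x. (U x)\<^sup>2 + (V x)\<^sup>2)" using assms by auto
  have "\<bar>U x * V x\<bar> \<le> (U x)\<^sup>2 + (V x)\<^sup>2" for x
  proof -
    have "2 * \<bar>U x * V x\<bar> \<le> (U x)\<^sup>2 + (V x)\<^sup>2"
      using sum_squares_bound[of "\<bar>U x\<bar>" "\<bar>V x\<bar>"] by (simp add: abs_mult)
    then show ?thesis using abs_ge_zero[of "U x * V x"] by linarith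
  qed
  then show "AE x in M. norm (U x * V x) \<le> norm ((U x)\<^sup>2 + (V x)\<^sup>2)"
    by (intro AE_I2) simp
qed measurable

lemma integrable_square_sum:
  fixes V :: "'i \<Rightarrow> 'a \<Rightarrow> real"
  assumes [measurable]: "\<And>k. k \<in> I \<Longrightarrow> V k \<in> borel_measurable M"
    and "\<And>k. k \<in> I \<Longrightarrow> integrable M (\<lambda>x. (V k x)\<^sup>2)"
  shows "integrable M (\<lambda>x. (\<Sum>k\<in>I. V k x)\<^sup>2)"
proof (rule Bochner_Integration.integrable_bound)
  show "integrable M (\<lambda>x. (\<Sum>k\<in>I. (V k x)\<^sup>2) * real (card I))"
    using assms by auto
  show "AE x in M. norm ((\<Sum>k\<in>I. V k x)\<^sup>2) \<le> norm ((\<Sum>k\<in>I. (V k x)\<^sup>2) * real (card I))"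
    by (intro AE_I2) (simp add: sum_squared_le_sum_of_squares sum_nonneg)
qed (use assms in measurable)

lemma integrable_mult_of_weighted_square:
  fixes p h :: "'a \<Rightarrow> real"
  assumes [measurable]: "p \<in> borel_measurable M" "h \<in> borel_measurable M"
    and p_nonneg: "\<And>x. 0 \<le> p x"
    and "integrable M p" "integrable M (\<lambda>x. p x * (h x)\<^sup>2)"
  shows "integrable M (\<lambda>x. p x * h x)"
proof (rule Bochner_Integration.integrable_bound)
  show "integrable M (\<lambda>x. p x + p x * (h x)\<^sup>2)" using assms by auto
  have "norm (p x * h x) \<le> norm (p x + p x * (h x)\<^sup>2)" for x
  proof -
    have "\<bar>h x\<bar> \<le> 1 + (h x)\<^sup>2"
      using sum_squares_bound[of 1 "\<bar>h x\<bar>"] by simp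
    then have "p x * \<bar>h x\<bar> \<le> p x * (1 + (h x)\<^sup>2)"
      using p_nonneg by (rule mult_left_mono)
    then show ?thesis
      using p_nonneg[of x] by (simp add: abs_mult distrib_left)
  qed
  then show "AE x in M. norm (p x * h x) \<le> norm (p x + p x * (h x)\<^sup>2)"
    by simp
qed measurable

lemma (in prob_space) indep_vars_integral_mult:
  fixes V :: "'i \<Rightarrow> 'a \<Rightarrow> real"
  assumes "indep_vars (\<lambda>_. borel) V I" "a \<in> I" "b \<in> I" "a \<noteq> b"
    and "integrable M (V a)" "integrable M (V b)"
  shows "(\<integral>x. V a x * V b x \<partial>M) = (\<integral>x. V a x \<partial>M) * (\<integral>x. V b x \<partial>M)"
proof -
  have "indep_vars (\<lambda>_. borel) V {a, b}"
    by (rule indep_vars_subset[OF assms(1)]) (use assms in auto)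
  then have "(\<integral>x. (\<Prod>k\<in>{a, b}. V k x) \<partial>M) = (\<Prod>k\<in>{a, b}. \<integral>x. V k x \<partial>M)"
    using assms by (intro indep_vars_lebesgue_integral) auto
  then show ?thesis using \<open>a \<noteq> b\<close> by simp
qed

lemma (in prob_space) variance_sum_uncorrelated:
  fixes V :: "'i \<Rightarrow> 'a \<Rightarrow> real"
  assumes fin: "finite I"
    and meas: "\<And>k. k \<in> I \<Longrightarrow> V k \<in> borel_measurable M"
    and sq: "\<And>k. k \<in> I \<Longrightarrow> integrable M (\<lambda>x. (V k x)\<^sup>2)"
    and uncorr: "\<And>a b. a \<in> I \<Longrightarrow> b \<in> I \<Longrightarrow> a \<noteq> b \<Longrightarrow>
               (\<integral>x. V a x * V b x \<partial>M) = (\<integral>x. V a x \<partial>M) * (\<integral>x. V b x \<partial>M)"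
  shows "(\<integral>x. ((\<Sum>k\<in>I. V k x) - (\<Sum>k\<in>I. \<integral>y. V k y \<partial>M))\<^sup>2 \<partial>M)
       = (\<Sum>k\<in>I. \<integral>x. (V k x - (\<integral>y. V k y \<partial>M))\<^sup>2 \<partial>M)"
proof -
  define c where "c k x = V k x - (\<integral>y. V k y \<partial>M)" for k x
  have int: "integrable M (V k)" if "k \<in> I" for k
    using square_integrable_imp_integrable[OF meas[OF that] sq[OF that]] .
  have c_meas: "c k \<in> borel_measurable M" if "k \<in> I" for k
    using meas[OF that] unfolding c_def by measurable
  have c_sq: "integrable M (\<lambda>x. (c k x)\<^sup>2)" if "k \<in> I" for k
    using sq[OF that] int[OF that] by (simp add: c_def power2_diff)
  have cross: "(\<integral>x. c a x * c b x \<partial>M) = (if a = b then \<integral>x. (c a x)\<^sup>2 \<partial>M else 0)"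
    if "a \<in> I" "b \<in> I" for a b
  proof (cases "a = b")
    case False
    have "(\<lambda>x. c a x * c b x) = (\<lambda>x. V a x * V b x - (\<integral>y. V b y \<partial>M) * V a x
        - (\<integral>y. V a y \<partial>M) * V b x + (\<integral>y. V a y \<partial>M) * (\<integral>y. V b y \<partial>M))"
      by (auto simp: c_def algebra_simps)
    then show ?thesis
      using False uncorr[OF that False] int that
        integrable_mult_of_square_integrable[OF meas meas sq sq, OF that that]
      by (simp add: prob_space)
  qed (simp add: power2_eq_square)
  have "(\<Sum>k\<in>I. V k x) - (\<Sum>k\<in>I. \<integral>y. V k y \<partial>M) = (\<Sum>k\<in>I. c k x)" for x
    by (simp add: c_def sum_subtractf)
  then have "(\<integral>x. ((\<Sum>k\<in>I. V k x) - (\<Sum>k\<in>I. \<integral>y. V k y \<partial>M))\<^sup>2 \<partial>M)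
      = (\<integral>x. (\<Sum>a\<in>I. \<Sum>b\<in>I. c a x * c b x) \<partial>M)"
    by (simp add: power2_eq_square sum_product)
  also have "\<dots> = (\<Sum>a\<in>I. \<Sum>b\<in>I. \<integral>x. c a x * c b x \<partial>M)"
    using integrable_mult_of_square_integrable[OF c_meas c_meas c_sq c_sq]
    by (simp add: integrable_sum)
  also have "\<dots> = (\<Sum>a\<in>I. \<integral>x. (c a x)\<^sup>2 \<partial>M)"
    using fin by (simp add: cross cong: sum.cong)
  finally show ?thesis by (simp add: c_def)
qed

lemma (in prob_space) rv_mean_scaled_sum:
  fixes V :: "'i \<Rightarrow> 'a \<Rightarrow> real"
  assumes "\<And>k. k \<in> I \<Longrightarrow> integrable M (V k)"
  shows "rv_mean M (\<lambda>x. (\<Sum>k\<in>I. V k x) / c) = (\<Sum>k\<in>I. \<integral>x. V k x \<partial>M) / c"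
  unfolding rv_mean_def using assms by simp

lemma (in prob_space) rv_var_scaled_sum_uncorrelated:
  fixes V :: "'i \<Rightarrow> 'a \<Rightarrow> real"
  assumes "finite I"
    and meas: "\<And>k. k \<in> I \<Longrightarrow> V k \<in> borel_measurable M"
    and sq: "\<And>k. k \<in> I \<Longrightarrow> integrable M (\<lambda>x. (V k x)\<^sup>2)"
    and "\<And>a b. a \<in> I \<Longrightarrow> b \<in> I \<Longrightarrow> a \<noteq> b \<Longrightarrow>
               (\<integral>x. V a x * V b x \<partial>M) = (\<integral>x. V a x \<partial>M) * (\<integral>x. V b x \<partial>M)"
  shows "rv_var M (\<lambda>x. (\<Sum>k\<in>I. V k x) / c) = (\<Sum>k\<in>I. \<integral>x. (V k x - (\<integral>y. V k y \<partial>M))\<^sup>2 \<partial>M) / c\<^sup>2"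
proof -
  have "rv_mean M (\<lambda>x. (\<Sum>k\<in>I. V k x) / c) = (\<Sum>k\<in>I. \<integral>x. V k x \<partial>M) / c"
    using square_integrable_imp_integrable[OF meas sq] by (intro rv_mean_scaled_sum)
  then show ?thesis
    unfolding rv_var_def
    using variance_sum_uncorrelated[OF assms]
    by (simp add: power_divide diff_divide_distrib[symmetric])
qed

lemma integral_weighted_square_shift:
  fixes p h :: "'a \<Rightarrow> real"
  assumes "integrable M p" "integrable M (\<lambda>x. p x * h x)" "integrable M (\<lambda>x. p x * (h x)\<^sup>2)"
    and "(\<integral>x. p x \<partial>M) = 1"
  defines "m \<equiv> \<integral>x. p x * h x \<partial>M"
  shows "(\<integral>x. p x * (h x - c)\<^sup>2 \<partial>M) = (\<integral>x. p x * (h x - m)\<^sup>2 \<partial>M) + (m - c)\<^sup>2"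
proof -
  have expand: "(\<integral>x. p x * (h x - a)\<^sup>2 \<partial>M) = (\<integral>x. p x * (h x)\<^sup>2 \<partial>M) - 2 * a * m + a\<^sup>2" for a
  proof -
    have "(\<lambda>x. p x * (h x - a)\<^sup>2) = (\<lambda>x. p x * (h x)\<^sup>2 - 2 * a * (p x * h x) + a\<^sup>2 * p x)"
      by (auto simp: power2_eq_square algebra_simps)
    then show ?thesis using assms by (simp add: m_def)
  qed
  show ?thesis unfolding expand by (simp add: power2_eq_square algebra_simps)
qed

lemma (in prob_space) distributed_transform_moments:
  fixes Y :: "'a \<Rightarrow> real" and p \<phi> :: "real \<Rightarrow> real"
  assumes Y: "distributed M lborel Y (\<lambda>x. ennreal (p x))" and p_nonneg: "\<And>x. 0 \<le> p x"
    and \<phi>_meas [measurable]: "\<phi> \<in> borel_measurable borel"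
  shows "(\<integral>x. p x \<partial>lborel) = 1"
    and "(\<lambda>\<omega>. \<phi> (Y \<omega>)) \<in> borel_measurable M"
    and "integrable lborel (\<lambda>x. p x * (\<phi> x)\<^sup>2) \<Longrightarrow> integrable M (\<lambda>\<omega>. (\<phi> (Y \<omega>))\<^sup>2)"
    and "(\<integral>\<omega>. \<phi> (Y \<omega>) \<partial>M) = (\<integral>x. p x * \<phi> x \<partial>lborel)"
    and "(\<integral>\<omega>. (\<phi> (Y \<omega>) - c)\<^sup>2 \<partial>M) = (\<integral>x. p x * (\<phi> x - c)\<^sup>2 \<partial>lborel)"
  using distributed_integral[OF Y, of "\<lambda>_. 1"] distributed_integral[OF Y, of \<phi>]
    distributed_integral[OF Y, of "\<lambda>x. (\<phi> x - c)\<^sup>2"]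
    distributed_integrable[OF Y, of "\<lambda>x. (\<phi> x)\<^sup>2"] distributed_measurable[OF Y]
  by (simp_all add: p_nonneg prob_space)

section \<open>A strong law of large numbers for uncorrelated variables\<close>

lemma tendsto_average_of_square_subsequence:
  fixes a :: "nat \<Rightarrow> real"
  assumes squares: "(\<lambda>k. (\<Sum>l<(Suc k)\<^sup>2. a l) / (real (Suc k))\<^sup>2) \<longlonglongrightarrow> 0"
    and gaps: "(\<lambda>k. (\<Sum>l\<in>{(Suc k)\<^sup>2..<(Suc (Suc k))\<^sup>2}. \<bar>a l\<bar>) / (real (Suc k))\<^sup>2) \<longlonglongrightarrow> 0"
  shows "(\<lambda>N. (\<Sum>l<N. a l) / real N) \<longlonglongrightarrow> 0"
proof -
  define b where "b k = (\<bar>\<Sum>l<(Suc k)\<^sup>2. a l\<bar> + (\<Sum>l\<in>{(Suc k)\<^sup>2..<(Suc (Suc k))\<^sup>2}. \<bar>a l\<bar>))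
    / (real (Suc k))\<^sup>2" for k
  have b: "b \<longlonglongrightarrow> 0"
    using tendsto_add[OF tendsto_rabs_zero[OF squares] gaps] by (simp add: b_def[abs_def] add_divide_distrib)
  define q where "q N = floor_sqrt N - 1" for N
  have q: "filterlim q at_top sequentially"
    unfolding filterlim_at_top eventually_sequentially
  proof (intro allI exI impI)
    fix Z N :: nat assume "(Suc Z)\<^sup>2 \<le> N"
    then have "Suc Z \<le> floor_sqrt N" by (rule le_floor_sqrtI)
    then show "Z \<le> q N" by (simp add: q_def)
  qed
  have "eventually (\<lambda>N. norm ((\<Sum>l<N. a l) / real N) \<le> b (q N)) sequentially"
    unfolding eventually_sequentially
  proof (intro exI allI impI)
    fix N :: nat assume "1 \<le> N"
    then have "1 \<le> floor_sqrt N" by (intro le_floor_sqrtI) simp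
    then have q1: "Suc (q N) = floor_sqrt N" by (simp add: q_def)
    then have lo: "(Suc (q N))\<^sup>2 \<le> N" and hi: "N < (Suc (Suc (q N)))\<^sup>2"
      using Suc_floor_sqrt_power2_gt[of N] by simp_all
    have "(\<Sum>l<N. a l) = (\<Sum>l<(Suc (q N))\<^sup>2. a l) + (\<Sum>l\<in>{(Suc (q N))\<^sup>2..<N}. a l)"
      using lo by (simp add: lessThan_atLeast0 sum.atLeastLessThan_concat)
    moreover have "\<bar>\<Sum>l\<in>{(Suc (q N))\<^sup>2..<N}. a l\<bar> \<le> (\<Sum>l\<in>{(Suc (q N))\<^sup>2..<(Suc (Suc (q N)))\<^sup>2}. \<bar>a l\<bar>)"
      using hi by (intro order_trans[OF sum_abs] sum_mono2) auto
    ultimately have "\<bar>\<Sum>l<N. a l\<bar> \<le> b (q N) * (real (Suc (q N)))\<^sup>2"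
      unfolding b_def by (simp del: of_nat_Suc)
    also have "\<dots> \<le> b (q N) * real N"
    proof (rule mult_left_mono)
      show "(real (Suc (q N)))\<^sup>2 \<le> real N"
        using lo by (simp only: of_nat_power[symmetric] of_nat_le_iff)
      show "0 \<le> b (q N)"
        by (simp add: b_def sum_nonneg)
    qed
    finally show "norm ((\<Sum>l<N. a l) / real N) \<le> b (q N)"
      using \<open>1 \<le> N\<close> by (simp add: abs_divide pos_divide_le_eq)
  qed
  then show ?thesis
    by (rule Lim_null_comparison[OF _ filterlim_compose[OF b q]])
qed

lemma (in prob_space) AE_eventually_small_of_second_moment_bound:
  fixes T :: "nat \<Rightarrow> 'a \<Rightarrow> real"
  assumes meas: "\<And>k. T k \<in> borel_measurable M"
    and sq: "\<And>k. integrable M (\<lambda>x. (T k x)\<^sup>2)"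
    and bnd: "\<And>k. (\<integral>x. (T k x)\<^sup>2 \<partial>M) \<le> K * (real (Suc k))\<^sup>2"
    and e: "0 < e"
  shows "AE x in M. eventually (\<lambda>k. \<bar>T k x / (real (Suc k))\<^sup>2\<bar> < e) sequentially"
proof -
  define A where "A k = {x\<in>space M. e * (real (Suc k))\<^sup>2 \<le> \<bar>T k x\<bar>}" for k
  have [measurable]: "A k \<in> sets M" for k
    unfolding A_def using meas[of k] by measurable
  have bound: "measure M (A k) \<le> K / e\<^sup>2 * inverse ((real (Suc k))\<^sup>2)" for k
  proof -
    have "measure M (A k) \<le> (\<integral>x. (T k x)\<^sup>2 \<partial>M) / (e * (real (Suc k))\<^sup>2)\<^sup>2"
      unfolding A_def using e by (intro second_moment_method[OF meas sq]) simp
    also have "\<dots> \<le> K * (real (Suc k))\<^sup>2 / (e * (real (Suc k))\<^sup>2)\<^sup>2"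
      using bnd[of k] by (intro divide_right_mono) auto
    also have "\<dots> = K / e\<^sup>2 * inverse ((real (Suc k))\<^sup>2)"
      using e by (simp add: power_mult_distrib divide_simps)
    finally show ?thesis .
  qed
  moreover have "summable (\<lambda>k. inverse ((real (Suc k))\<^sup>2))"
    using inverse_power_summable[of 2, where 'a=real] summable_Suc_iff[where f="\<lambda>k. inverse (real k ^ 2)"]
    by simp
  ultimately have "summable (\<lambda>k. measure M (A k))"
    by (rule_tac summable_comparison_test[OF _ summable_mult[of _ "K / e\<^sup>2"]]) auto
  then have "AE x in M. eventually (\<lambda>k. x \<in> space M - A k) sequentially"
    by (intro borel_cantelli_AE1) (auto simp: emeasure_eq_measure)
  then show ?thesis
    by (rule AE_mp) (auto intro!: AE_I2 elim!: eventually_mono simp: A_def abs_divide field_simps)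
qed

lemma (in prob_space) AE_tendsto_zero_of_second_moment_bound:
  fixes T :: "nat \<Rightarrow> 'a \<Rightarrow> real"
  assumes meas: "\<And>k. T k \<in> borel_measurable M"
    and sq: "\<And>k. integrable M (\<lambda>x. (T k x)\<^sup>2)"
    and bnd: "\<And>k. (\<integral>x. (T k x)\<^sup>2 \<partial>M) \<le> K * (real (Suc k))\<^sup>2"
  shows "AE x in M. (\<lambda>k. T k x / (real (Suc k))\<^sup>2) \<longlonglongrightarrow> 0"
proof -
  have "AE x in M. \<forall>r::nat.
      eventually (\<lambda>k. \<bar>T k x / (real (Suc k))\<^sup>2\<bar> < inverse (real (Suc r))) sequentially"
    unfolding AE_all_countable
    by (intro allI AE_eventually_small_of_second_moment_bound[OF meas sq bnd]) simp
  then show ?thesis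
  proof (rule AE_mp, intro AE_I2 impI)
    fix x assume small: "\<forall>r::nat.
      eventually (\<lambda>k. \<bar>T k x / (real (Suc k))\<^sup>2\<bar> < inverse (real (Suc r))) sequentially"
    show "(\<lambda>k. T k x / (real (Suc k))\<^sup>2) \<longlonglongrightarrow> 0"
    proof (rule LIMSEQ_I)
      fix e :: real assume "0 < e"
      then obtain r where "inverse (real (Suc r)) < e" using reals_Archimedean by blast
      then show "\<exists>k0. \<forall>k\<ge>k0. norm (T k x / (real (Suc k))\<^sup>2 - 0) < e"
        using small[rule_format, of r] unfolding eventually_sequentially by force
    qed
  qed
qed

lemma (in prob_space) strong_law_uncorrelated:
  fixes V :: "nat \<Rightarrow> 'a \<Rightarrow> real"
  assumes meas [measurable]: "\<And>k. V k \<in> borel_measurable M"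
    and sq: "\<And>k. integrable M (\<lambda>x. (V k x)\<^sup>2)"
    and mean0: "\<And>k. (\<integral>x. V k x \<partial>M) = 0"
    and uncorr: "\<And>a b. a \<noteq> b \<Longrightarrow> (\<integral>x. V a x * V b x \<partial>M) = 0"
    and bnd: "\<And>k. (\<integral>x. (V k x)\<^sup>2 \<partial>M) \<le> C"
  shows "AE x in M. (\<lambda>N. (\<Sum>k<N. V k x) / real N) \<longlonglongrightarrow> 0"
proof -
  define J where "J k = {(Suc k)\<^sup>2..<(Suc (Suc k))\<^sup>2}" for k
  have "0 \<le> (\<integral>x. (V 0 x)\<^sup>2 \<partial>M)" by (rule Bochner_Integration.integral_nonneg) simp
  then have C: "0 \<le> C" using bnd[of 0] by linarith
  have squares: "AE x in M. (\<lambda>k. (\<Sum>l<(Suc k)\<^sup>2. V l x) / (real (Suc k))\<^sup>2) \<longlonglongrightarrow> 0"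
  proof (rule AE_tendsto_zero_of_second_moment_bound[where K = C])
    fix k
    show "integrable M (\<lambda>x. (\<Sum>l<(Suc k)\<^sup>2. V l x)\<^sup>2)"
      using sq by (intro integrable_square_sum) auto
    have "(\<integral>x. (\<Sum>l<(Suc k)\<^sup>2. V l x)\<^sup>2 \<partial>M) = (\<Sum>l<(Suc k)\<^sup>2. \<integral>x. (V l x)\<^sup>2 \<partial>M)"
      using variance_sum_uncorrelated[of "{..<(Suc k)\<^sup>2}" V] sq by (simp add: mean0 uncorr)
    also have "\<dots> \<le> (\<Sum>l<(Suc k)\<^sup>2. C)"
      by (intro sum_mono bnd)
    finally show "(\<integral>x. (\<Sum>l<(Suc k)\<^sup>2. V l x)\<^sup>2 \<partial>M) \<le> C * (real (Suc k))\<^sup>2"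
      by (simp add: mult.commute)
  qed simp
  have gaps: "AE x in M. (\<lambda>k. (\<Sum>l\<in>J k. \<bar>V l x\<bar>) / (real (Suc k))\<^sup>2) \<longlonglongrightarrow> 0"
  proof (rule AE_tendsto_zero_of_second_moment_bound[where K = "9 * C"])
    fix k
    have bound: "(\<Sum>l\<in>J k. \<bar>V l x\<bar>)\<^sup>2 \<le> real (card (J k)) * (\<Sum>l\<in>J k. (V l x)\<^sup>2)" for x
      using sum_squared_le_sum_of_squares[of "\<lambda>l. \<bar>V l x\<bar>" "J k"] by (simp add: mult.commute)
    show int: "integrable M (\<lambda>x. (\<Sum>l\<in>J k. \<bar>V l x\<bar>)\<^sup>2)"
      using sq by (intro integrable_square_sum) auto
    have "(\<integral>x. (\<Sum>l\<in>J k. \<bar>V l x\<bar>)\<^sup>2 \<partial>M) \<le> (\<integral>x. real (card (J k)) * (\<Sum>l\<in>J k. (V l x)\<^sup>2) \<partial>M)"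
      using sq by (intro integral_mono[OF int _ bound]) auto
    also have "\<dots> = real (card (J k)) * (\<Sum>l\<in>J k. \<integral>x. (V l x)\<^sup>2 \<partial>M)"
      using sq by simp
    also have "\<dots> \<le> real (card (J k)) * (\<Sum>l\<in>J k. C)"
      by (intro mult_left_mono sum_mono bnd) auto
    also have "\<dots> = real (card (J k)) * real (card (J k)) * C"
      by simp
    also have "\<dots> \<le> (3 * real (Suc k)) * (3 * real (Suc k)) * C"
      using C by (intro mult_right_mono mult_mono) (auto simp: J_def power2_eq_square)
    finally show "(\<integral>x. (\<Sum>l\<in>J k. \<bar>V l x\<bar>)\<^sup>2 \<partial>M) \<le> 9 * C * (real (Suc k))\<^sup>2"
      by (simp add: power2_eq_square algebra_simps)
  qed simp
  show ?thesis
    using squares gaps by eventually_elim (use tendsto_average_of_square_subsequence J_def in auto)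
qed

lemma (in prob_space) strong_law_indep:
  fixes Z :: "nat \<Rightarrow> 'a \<Rightarrow> real"
  assumes indep: "indep_vars (\<lambda>_. borel) Z UNIV"
    and sq: "\<And>i. integrable M (\<lambda>x. (Z i x)\<^sup>2)"
    and mean: "\<And>i. (\<integral>x. Z i x \<partial>M) = m"
    and var: "\<And>i. (\<integral>x. (Z i x - m)\<^sup>2 \<partial>M) \<le> C"
  shows "AE x in M. (\<lambda>N. (\<Sum>i<N. Z i x) / real N) \<longlonglongrightarrow> m"
proof -
  define V where "V i x = Z i x - m" for i x
  have Z_meas [measurable]: "Z i \<in> borel_measurable M" for i
    using indep by (auto simp: indep_vars_def)
  have Z_int: "integrable M (Z i)" for i
    using square_integrable_imp_integrable[OF Z_meas sq] .
  have V_indep: "indep_vars (\<lambda>_. borel) V UNIV"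
    unfolding V_def by (rule indep_vars_compose2[OF indep]) simp
  have V_int: "integrable M (V i)" for i
    using Z_int by (simp add: V_def[abs_def])
  have V_sq: "integrable M (\<lambda>x. (V i x)\<^sup>2)" for i
    using sq Z_int by (simp add: V_def power2_diff)
  have V_mean: "(\<integral>x. V i x \<partial>M) = 0" for i
    using Z_int mean by (simp add: V_def prob_space)
  have "AE x in M. (\<lambda>N. (\<Sum>i<N. V i x) / real N) \<longlonglongrightarrow> 0"
  proof (rule strong_law_uncorrelated[OF _ V_sq V_mean])
    show "(\<integral>x. V a x * V b x \<partial>M) = 0" if "a \<noteq> b" for a b
      using indep_vars_integral_mult[OF V_indep _ _ that V_int V_int] V_mean by simp
  qed (use var in \<open>auto simp: V_def\<close>)
  then show ?thesis
  proof eventually_elim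
    case (elim x)
    have "(\<lambda>N. (\<Sum>i<N. V i x) / real N + m) \<longlonglongrightarrow> 0 + m"
      by (intro tendsto_add elim tendsto_const)
    moreover have "eventually (\<lambda>N. (\<Sum>i<N. V i x) / real N + m = (\<Sum>i<N. Z i x) / real N) sequentially"
      using eventually_gt_at_top[of 0]
      by eventually_elim (simp add: V_def sum_subtractf field_simps)
    ultimately show ?case by (simp add: tendsto_cong)
  qed
qed

section \<open>Rows of an independent array\<close>

lemma (in prob_space) indep_vars_reindex:
  assumes inj: "inj_on f I" and indep: "indep_vars N X (f ` I)"
  shows "indep_vars (\<lambda>i. N (f i)) (\<lambda>i. X (f i)) I"
  unfolding indep_vars_def2
proof safe
  define F where "F y = {X y -` A \<inter> space M |A. A \<in> sets (N y)}" for y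
  have F: "indep_sets F (f ` I)"
    using indep unfolding indep_vars_def2 F_def by blast
  show "random_variable (N (f i)) (X (f i))" if "i \<in> I" for i
    using indep that by (auto simp: indep_vars_def)
  show "indep_sets (\<lambda>i. F (f i)) I"
  proof (rule indep_setsI)
    show "F (f i) \<subseteq> events" if "i \<in> I" for i
      using F that unfolding indep_sets_def by blast
  next
    fix A J assume J: "J \<noteq> {}" "J \<subseteq> I" "finite J" and A: "\<forall>j\<in>J. A j \<in> F (f j)"
    define B where "B y = A (the_inv_into J f y)" for y
    have inj_J: "inj_on f J" using inj J(2) by (rule inj_on_subset)
    have B: "B (f j) = A j" if "j \<in> J" for j
      using the_inv_into_f_f[OF inj_J that] by (simp add: B_def)
    have "prob (\<Inter>y\<in>f ` J. B y) = (\<Prod>y\<in>f ` J. prob (B y))"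
      using J A B by (intro indep_setsD[OF F]) auto
    then show "prob (\<Inter>j\<in>J. A j) = (\<Prod>j\<in>J. prob (A j))"
      using B by (simp add: prod.reindex[OF inj_J])
  qed
qed

lemma (in prob_space) indep_vars_rows:
  assumes indep: "indep_vars (\<lambda>_. N) X (I \<times> J)" and "inj_on \<phi> K" "\<phi> ` K \<subseteq> J"
  shows "indep_vars (\<lambda>_. PiM I (\<lambda>_. N)) (\<lambda>k \<omega>. \<lambda>i\<in>I. X (i, \<phi> k) \<omega>) K"
proof -
  have "indep_vars (\<lambda>k. PiM (I \<times> {\<phi> k}) (\<lambda>_. N)) (\<lambda>k \<omega>. \<lambda>p\<in>I \<times> {\<phi> k}. X p \<omega>) K"
    using assms by (intro indep_vars_restrict[OF indep]) (auto simp: disjoint_family_on_def inj_on_def)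
  moreover have "(\<lambda>v. \<lambda>i\<in>I. v (i, \<phi> k)) \<in> PiM (I \<times> {\<phi> k}) (\<lambda>_. N) \<rightarrow>\<^sub>M PiM I (\<lambda>_. N)" for k
    by (intro measurable_restrict measurable_component_singleton) auto
  ultimately have "indep_vars (\<lambda>_. PiM I (\<lambda>_. N)) (\<lambda>k \<omega>. \<lambda>i\<in>I. (\<lambda>p\<in>I \<times> {\<phi> k}. X p \<omega>) (i, \<phi> k)) K"
    by (rule indep_vars_compose2)
  then show ?thesis by (simp cong: restrict_cong)
qed

lemma (in prob_space) distr_row_eq_PiM:
  assumes indep: "indep_vars (\<lambda>_. N) X (I \<times> J)" and "I \<noteq> {}" "j \<in> J"
  shows "distr M (PiM I (\<lambda>_. N)) (\<lambda>\<omega>. \<lambda>i\<in>I. X (i, j) \<omega>) = PiM I (\<lambda>i. distr M N (X (i, j)))"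
proof -
  have "indep_vars (\<lambda>_. N) X ((\<lambda>i. (i, j)) ` I)"
    using assms by (intro indep_vars_subset[OF indep]) auto
  then have "indep_vars (\<lambda>_. N) (\<lambda>i. X (i, j)) I"
    using indep_vars_reindex[of "\<lambda>i. (i, j)" I "\<lambda>_. N" X] by (simp add: inj_on_def)
  then show ?thesis
    using assms indep_vars_iff_distr_eq_PiM'[where M'="\<lambda>_. N" and X="\<lambda>i. X (i, j)"]
    by (auto simp: indep_vars_def)
qed

section \<open>Order statistics and judgment-subset densities\<close>

lemma sum_order_statistic_coeffs:
  fixes a :: real
  assumes "1 \<le> s"
  shows "(\<Sum>u=1..s. fact s / (fact (u - 1) * fact (s - u)) * a ^ (u - 1) * (1 - a) ^ (s - u)) = real s"
proof -
  obtain t where s: "s = Suc t" using assms by (cases s) auto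
  have coeff: "fact (Suc t) / (fact v * fact (t - v)) = real (Suc t) * real (t choose v)" if "v \<le> t" for v
    using that by (simp add: binomial_fact fact_Suc[of t])
  have "(\<Sum>u=1..s. fact s / (fact (u - 1) * fact (s - u)) * a ^ (u - 1) * (1 - a) ^ (s - u))
      = (\<Sum>v\<le>t. fact (Suc t) / (fact v * fact (t - v)) * a ^ v * (1 - a) ^ (t - v))"
    unfolding s atMost_atLeast0 One_nat_def sum.shift_bounds_cl_Suc_ivl by simp
  also have "\<dots> = (\<Sum>v\<le>t. real (Suc t) * (real (t choose v) * a ^ v * (1 - a) ^ (t - v)))"
  proof (rule sum.cong[OF refl])
    fix v assume "v \<in> {..t}"
    then show "fact (Suc t) / (fact v * fact (t - v)) * a ^ v * (1 - a) ^ (t - v)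
        = real (Suc t) * (real (t choose v) * a ^ v * (1 - a) ^ (t - v))"
      by (simp only: coeff atMost_iff mult.assoc)
  qed
  also have "\<dots> = real (Suc t) * (\<Sum>v\<le>t. real (t choose v) * a ^ v * (1 - a) ^ (t - v))"
    by (simp add: sum_distrib_left)
  also have "\<dots> = real (Suc t) * (a + (1 - a)) ^ t"
    by (simp only: binomial_ring)
  finally show ?thesis by (simp add: s)
qed

lemma sum_consecutive_blocks:
  fixes \<phi> :: "nat \<Rightarrow> 'a::comm_monoid_add"
  shows "(\<Sum>k=1..n. \<Sum>u\<in>{(k - 1) * m + 1 .. k * m}. \<phi> u) = (\<Sum>u\<in>{1..n * m}. \<phi> u)"
proof (induction n)
  case (Suc n)
  have "{1..Suc n * m} = {1..n * m} \<union> {n * m + 1 .. Suc n * m}" by auto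
  then have "(\<Sum>u\<in>{1..Suc n * m}. \<phi> u) = (\<Sum>u\<in>{1..n * m}. \<phi> u) + (\<Sum>u\<in>{n * m + 1 .. Suc n * m}. \<phi> u)"
    by (simp add: sum.union_disjoint)
  then show ?case using Suc.IH by simp
qed simp

locale prob_density =
  fixes f :: "real \<Rightarrow> real"
  assumes f_meas [measurable]: "f \<in> borel_measurable lborel"
    and f_nonneg: "\<And>x. 0 \<le> f x"
    and f_int: "(\<integral>\<^sup>+ x. ennreal (f x) \<partial>lborel) = 1"
begin

sublocale P: prob_space "density lborel (\<lambda>x. ennreal (f x))"
  by (rule prob_spaceI) (simp add: emeasure_density f_int)

lemma f_borel [measurable]: "f \<in> borel_measurable borel"
  using f_meas by simp

lemma f_integrable: "integrable lborel f"
  by (rule integrableI_nn_integral_finite[where x=1]) (auto simp: f_nonneg f_int)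

lemma integral_f: "(\<integral>x. f x \<partial>lborel) = 1"
  using f_int f_nonneg by (simp add: integral_eq_nn_integral)

lemma cdf_eq_prob: "cdf_of f x = P.prob {..x}"
  by (simp add: cdf_of_def)

lemma cdf_nonneg: "0 \<le> cdf_of f x" and cdf_le_1: "cdf_of f x \<le> 1"
  by (simp_all add: cdf_eq_prob)

lemma mono_cdf: "mono (cdf_of f)"
  unfolding mono_def cdf_eq_prob by (auto intro!: P.finite_measure_mono)

lemma cdf_measurable [measurable]: "cdf_of f \<in> borel_measurable borel"
  by (rule borel_measurable_mono[OF mono_cdf])

text \<open>The set where the cdf reaches 1 is an up-ray; it is covered by its infimum and the
  rays above rationals, all of which are null for the distribution.\<close>
lemma AE_cdf_less_1: "AE x in lborel. 0 < f x \<longrightarrow> cdf_of f x < 1"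
proof -
  define T where "T = {x. cdf_of f x = 1}"
  define Q where "Q = {q \<in> \<rat>. cdf_of f q = 1}"
  have T_sets: "T \<in> P.events"
    unfolding T_def by (simp add: pred_def[symmetric]) measurable
  have ray_null: "{q<..} \<in> null_sets (density lborel f)" if "q \<in> Q" for q
  proof -
    have "{q<..} = space (density lborel f) - {..q}" by auto
    then have "P.prob {q<..} = 1 - cdf_of f q"
      using P.prob_compl[of "{..q}"] by (simp add: cdf_eq_prob)
    then show ?thesis
      using that by (simp add: Q_def P.emeasure_eq_measure null_sets_def)
  qed
  have point_null: "{a} \<in> null_sets (density lborel f)" for a
  proof -
    have "AE x in lborel. x \<notin> {a}" by (rule AE_not_in) (simp add: null_sets_def)
    then have "AE x in lborel. x \<in> {a} \<longrightarrow> ennreal (f x) = 0"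
      by (rule AE_mp) (auto intro!: AE_I2)
    then show ?thesis by (subst null_sets_density_iff) auto
  qed
  have cover: "T \<subseteq> (\<Union>q\<in>Q. {q<..}) \<union> {Inf T}"
  proof
    fix x assume x: "x \<in> T"
    show "x \<in> (\<Union>q\<in>Q. {q<..}) \<union> {Inf T}"
    proof (cases "\<exists>y\<in>T. y < x")
      case True
      then obtain y q where "y \<in> T" "q \<in> \<rat>" "y < q" "q < x"
        using Rats_dense_in_real by blast
      moreover have "cdf_of f y \<le> cdf_of f q"
        using mono_cdf \<open>y < q\<close> by (simp add: mono_def)
      ultimately have "q \<in> Q"
        using cdf_le_1[of q] by (auto simp: T_def Q_def)
      then show ?thesis using \<open>q < x\<close> by auto
    next
      case False
      then have "Inf T = x" using x by (intro cInf_eq_minimum) (auto simp: not_less)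
      then show ?thesis by auto
    qed
  qed
  have "(\<Union>q\<in>Q. {q<..}) \<union> {Inf T} \<in> null_sets (density lborel f)"
    using countable_subset[OF _ countable_rat, of Q] ray_null point_null
    by (intro null_sets.Un null_sets_UN') (auto simp: Q_def)
  then have "T \<in> null_sets (density lborel f)"
    by (rule null_sets_subset[OF _ T_sets cover])
  then have "AE x in lborel. x \<in> T \<longrightarrow> ennreal (f x) = 0"
    by (subst (asm) null_sets_density_iff) auto
  then show ?thesis
    by (rule AE_mp) (auto intro!: AE_I2 simp: T_def f_nonneg cdf_le_1 order.not_eq_order_implies_strict)
qed

end

locale pros_design = prob_density f for f +
  fixes s n :: nat and \<alpha> :: "nat \<Rightarrow> nat \<Rightarrow> real"
  assumes n_pos: "1 \<le> n" and s_pos: "1 \<le> s" and n_dvd: "n dvd s"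
    and alpha: "doubly_stochastic n \<alpha>"
begin

abbreviation "g \<equiv> pros_density f s n \<alpha>"

lemma s_eq: "s = n * (s div n)" and subset_size_pos: "1 \<le> s div n"
  using n_dvd s_pos by (auto simp: Suc_le_eq intro: Nat.gr0I)

lemma alpha_nonneg: "j \<in> {1..n} \<Longrightarrow> k \<in> {1..n} \<Longrightarrow> 0 \<le> \<alpha> j k"
  using alpha by (simp add: doubly_stochastic_def)

lemma os_density_measurable [measurable]: "os_density f s u \<in> borel_measurable borel"
  unfolding os_density_def by measurable

lemma os_density_nonneg: "0 \<le> os_density f s u x"
  unfolding os_density_def using cdf_nonneg[of x] cdf_le_1[of x] f_nonneg[of x] by simp

lemma os_density_pos: "0 < f x \<Longrightarrow> cdf_of f x < 1 \<Longrightarrow> 0 < os_density f s 1 x"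
  using s_pos by (simp add: os_density_def)

lemma sum_os_density: "(\<Sum>u=1..s. os_density f s u x) = real s * f x"
proof -
  have "(\<Sum>u=1..s. os_density f s u x) = (\<Sum>u=1..s. fact s / (fact (u - 1) * fact (s - u))
      * cdf_of f x ^ (u - 1) * (1 - cdf_of f x) ^ (s - u)) * f x"
    by (simp add: os_density_def sum_distrib_right)
  then show ?thesis by (simp only: sum_order_statistic_coeffs[OF s_pos])
qed

lemma pros_density_measurable [measurable]: "g j \<in> borel_measurable borel"
  unfolding pros_density_def by measurable

lemma pros_density_nonneg: "j \<in> {1..n} \<Longrightarrow> 0 \<le> g j x"
  unfolding pros_density_def using alpha_nonneg os_density_nonneg
  by (intro mult_nonneg_nonneg sum_nonneg) auto

text \<open>The column sums of \<open>\<alpha>\<close> are 1 and the order statistic densities add up to \<open>s f\<close>.\<close>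
lemma sum_pros_density: "(\<Sum>j=1..n. g j x) = real n * f x"
proof -
  have "(\<Sum>j=1..n. \<Sum>k=1..n. \<Sum>u\<in>pros_subset s n k. \<alpha> j k * os_density f s u x)
      = (\<Sum>k=1..n. \<Sum>j=1..n. \<Sum>u\<in>pros_subset s n k. \<alpha> j k * os_density f s u x)"
    by (rule sum.swap)
  also have "\<dots> = (\<Sum>k=1..n. \<Sum>u\<in>pros_subset s n k. \<Sum>j=1..n. \<alpha> j k * os_density f s u x)"
    by (rule sum.cong[OF refl]) (rule sum.swap)
  also have "\<dots> = (\<Sum>k=1..n. \<Sum>u\<in>pros_subset s n k. (\<Sum>j=1..n. \<alpha> j k) * os_density f s u x)"
    by (simp add: sum_distrib_right)
  also have "\<dots> = (\<Sum>k=1..n. \<Sum>u\<in>pros_subset s n k. os_density f s u x)"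
    using alpha by (intro sum.cong refl) (simp add: doubly_stochastic_def)
  also have "\<dots> = real s * f x"
    unfolding pros_subset_def sum_consecutive_blocks s_eq[symmetric] by (rule sum_os_density)
  finally have "(\<Sum>j=1..n. g j x) = 1 / real (s div n) * (real s * f x)"
    by (simp only: pros_density_def sum_distrib_left[symmetric])
  moreover have "real s = real n * real (s div n)"
    using s_eq by (metis of_nat_mult)
  ultimately show ?thesis
    using subset_size_pos by simp
qed

lemma pros_density_le: "j \<in> {1..n} \<Longrightarrow> g j x \<le> real n * f x"
  using member_le_sum[of j "{1..n}" "\<lambda>j. g j x"] pros_density_nonneg sum_pros_density[of x]
  by simp

lemma AE_pros_density_pos:
  assumes j: "j \<in> {1..n}" and "0 < \<alpha> j 1"
  shows "AE x in lborel. 0 < f x \<longrightarrow> 0 < g j x"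
  using AE_cdf_less_1
proof eventually_elim
  case (elim x)
  have "\<alpha> j 1 * os_density f s 1 x \<le> (\<Sum>u\<in>pros_subset s n 1. \<alpha> j 1 * os_density f s u x)"
    using subset_size_pos alpha_nonneg[OF j] os_density_nonneg n_pos
    by (intro member_le_sum) (auto simp: pros_subset_def)
  also have "\<dots> \<le> (\<Sum>k=1..n. \<Sum>u\<in>pros_subset s n k. \<alpha> j k * os_density f s u x)"
    using n_pos alpha_nonneg[OF j] os_density_nonneg
    by (intro member_le_sum[where f="\<lambda>k. \<Sum>u\<in>pros_subset s n k. \<alpha> j k * os_density f s u x"] sum_nonneg)
       (auto simp: pros_subset_def)
  finally have "\<alpha> j 1 * os_density f s 1 x
      \<le> (\<Sum>k=1..n. \<Sum>u\<in>pros_subset s n k. \<alpha> j k * os_density f s u x)" .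
  moreover have "0 < f x \<Longrightarrow> 0 < \<alpha> j 1 * os_density f s 1 x"
    using elim \<open>0 < \<alpha> j 1\<close> os_density_pos by simp
  ultimately show ?case
    using subset_size_pos by (auto simp: pros_density_def)
qed

end

section \<open>The PROS estimator\<close>

locale pros_sample = pros_design f s n \<alpha> + prob_space M
  for f s n \<alpha> and M :: "'a measure" +
  fixes h :: "real \<Rightarrow> real" and X :: "nat \<Rightarrow> nat \<Rightarrow> 'a \<Rightarrow> real"
  assumes h_meas [measurable]: "h \<in> borel_measurable borel"
    and h_mom: "integrable lborel (\<lambda>x. f x * (h x)\<^sup>2)"
    and X_indep: "indep_vars (\<lambda>_. borel) (\<lambda>(j, i). X j i) ({1..n} \<times> {1..})"
    and X_distr: "\<And>j i. j \<in> {1..n} \<Longrightarrow> 1 \<le> i \<Longrightarrow> distributed M lborel (X j i) (\<lambda>x. ennreal (g j x))"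
begin

definition "pop_mean = (\<integral>x. f x * h x \<partial>lborel)"
definition "pop_var = (\<integral>x. f x * (h x - pop_mean)\<^sup>2 \<partial>lborel)"
definition "stratum_mean j = (\<integral>x. g j x * h x \<partial>lborel)"
definition "stratum_var j = (\<integral>x. g j x * (h x - stratum_mean j)\<^sup>2 \<partial>lborel)"
definition "cycle_var = (\<Sum>j=1..n. stratum_var j)"

lemma integral_pros_density: "j \<in> {1..n} \<Longrightarrow> (\<integral>x. g j x \<partial>lborel) = 1"
  by (rule distributed_transform_moments(1)[OF X_distr pros_density_nonneg h_meas]) auto

lemma integrable_pros_density:
  assumes "j \<in> {1..n}"
  shows "integrable lborel (g j)"
proof (rule Bochner_Integration.integrable_bound)
  show "integrable lborel (\<lambda>x. real n * f x)"
    using f_integrable by simp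
  show "AE x in lborel. norm (g j x) \<le> norm (real n * f x)"
    using pros_density_le[OF assms] pros_density_nonneg[OF assms]
    by (intro AE_I2) (auto intro: order_trans[OF _ abs_ge_self])
qed simp

lemma integrable_pros_density_square:
  assumes "j \<in> {1..n}"
  shows "integrable lborel (\<lambda>x. g j x * (h x)\<^sup>2)"
proof (rule Bochner_Integration.integrable_bound)
  show "integrable lborel (\<lambda>x. real n * f x * (h x)\<^sup>2)"
    using h_mom by (simp add: mult.assoc)
  have "g j x * (h x)\<^sup>2 \<le> real n * f x * (h x)\<^sup>2" for x
    using pros_density_le[OF assms] by (rule mult_right_mono) simp
  then show "AE x in lborel. norm (g j x * (h x)\<^sup>2) \<le> norm (real n * f x * (h x)\<^sup>2)"
    using pros_density_nonneg[OF assms] by (intro AE_I2) (auto intro: order_trans[OF _ abs_ge_self])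
qed simp

lemma integrable_pros_density_mult: "j \<in> {1..n} \<Longrightarrow> integrable lborel (\<lambda>x. g j x * h x)"
  by (rule integrable_mult_of_weighted_square[OF _ _ pros_density_nonneg
        integrable_pros_density integrable_pros_density_square]) auto

lemma integrable_pros_density_centered:
  assumes "j \<in> {1..n}"
  shows "integrable lborel (\<lambda>x. g j x * (h x - c)\<^sup>2)"
proof -
  have "(\<lambda>x. g j x * (h x - c)\<^sup>2) = (\<lambda>x. g j x * (h x)\<^sup>2 - 2 * c * (g j x * h x) + c\<^sup>2 * g j x)"
    by (auto simp: power2_eq_square algebra_simps)
  then show ?thesis
    using assms integrable_pros_density integrable_pros_density_square integrable_pros_density_mult
    by simp
qed

lemma integral_pros_density_centered:
  "j \<in> {1..n} \<Longrightarrow>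
    (\<integral>x. g j x * (h x - c)\<^sup>2 \<partial>lborel) = stratum_var j + (stratum_mean j - c)\<^sup>2"
  unfolding stratum_var_def stratum_mean_def
  by (rule integral_weighted_square_shift[OF integrable_pros_density integrable_pros_density_mult
      integrable_pros_density_square integral_pros_density])

lemma pop_var_le: "pop_var \<le> (\<integral>x. f x * (h x - c)\<^sup>2 \<partial>lborel)"
proof -
  have "integrable lborel (\<lambda>x. f x * h x)"
    by (rule integrable_mult_of_weighted_square[OF _ _ f_nonneg f_integrable h_mom]) auto
  then show ?thesis
    unfolding pop_var_def pop_mean_def
    using integral_weighted_square_shift[OF f_integrable _ h_mom integral_f, of c] by simp
qed

lemma sum_stratum_mean: "(\<Sum>j=1..n. stratum_mean j) = real n * pop_mean"
proof -
  have "(\<Sum>j=1..n. stratum_mean j) = (\<integral>x. (\<Sum>j=1..n. g j x) * h x \<partial>lborel)"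
    unfolding stratum_mean_def using integrable_pros_density_mult by (simp add: sum_distrib_right)
  also have "\<dots> = real n * pop_mean"
    by (simp only: sum_pros_density) (simp add: pop_mean_def mult.assoc)
  finally show ?thesis .
qed

lemma stratum_var_nonneg: "j \<in> {1..n} \<Longrightarrow> 0 \<le> stratum_var j"
  unfolding stratum_var_def using pros_density_nonneg by (auto intro!: integral_nonneg_AE)

text \<open>Law of total variance: the subset densities average to \<open>f\<close>, so \<open>n\<close> times the population
  variance is the sum of the within-subset variances and of the squared deviations of the subset
  means from the population mean.\<close>
lemma cycle_var_le: "cycle_var \<le> real n * pop_var"
proof -
  have "cycle_var \<le> (\<Sum>j=1..n. \<integral>x. g j x * (h x - pop_mean)\<^sup>2 \<partial>lborel)"
    unfolding cycle_var_def by (intro sum_mono) (simp add: integral_pros_density_centered)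
  also have "\<dots> = (\<integral>x. (\<Sum>j=1..n. g j x) * (h x - pop_mean)\<^sup>2 \<partial>lborel)"
    using integrable_pros_density_centered by (simp add: sum_distrib_right)
  also have "\<dots> = real n * pop_var"
    by (simp only: sum_pros_density) (simp add: pop_var_def mult.assoc)
  finally show ?thesis .
qed

lemma cycle_var_pos:
  assumes "0 < pop_var"
  shows "0 < cycle_var"
proof (rule ccontr)
  assume "\<not> 0 < cycle_var"
  moreover have "0 \<le> cycle_var"
    unfolding cycle_var_def by (rule sum_nonneg) (simp add: stratum_var_nonneg)
  ultimately have "(\<Sum>j=1..n. stratum_var j) = 0"
    unfolding cycle_var_def by linarith
  then have zero: "stratum_var j = 0" if "j \<in> {1..n}" for j
    using that stratum_var_nonneg sum_nonneg_eq_0_iff[of "{1..n}" stratum_var] by simp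
  have column: "(\<Sum>j=1..n. \<alpha> j 1) = 1" using alpha n_pos by (simp add: doubly_stochastic_def)
  have "\<exists>j\<in>{1..n}. \<alpha> j 1 \<noteq> 0"
  proof (rule ccontr)
    assume "\<not> (\<exists>j\<in>{1..n}. \<alpha> j 1 \<noteq> 0)"
    then have "(\<Sum>j=1..n. \<alpha> j 1) = 0" by simp
    with column show False by simp
  qed
  then obtain j where j: "j \<in> {1..n}" "\<alpha> j 1 \<noteq> 0" by blast
  then have "0 < \<alpha> j 1" using alpha_nonneg[OF j(1), of 1] n_pos by auto
  define c where "c = stratum_mean j"
  have "(\<integral>x. g j x * (h x - c)\<^sup>2 \<partial>lborel) = 0"
    using integral_pros_density_centered[OF j(1)] zero[OF j(1)] by (simp add: c_def)
  then have "AE x in lborel. g j x * (h x - c)\<^sup>2 = 0"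
    using integrable_pros_density_centered[OF j(1)] pros_density_nonneg[OF j(1)]
    by (subst (asm) integral_nonneg_eq_0_iff_AE) auto
  then have "AE x in lborel. f x * (h x - c)\<^sup>2 = 0"
    using AE_pros_density_pos[OF j(1) \<open>0 < \<alpha> j 1\<close>]
  proof eventually_elim
    case (elim x)
    show ?case
    proof (cases "f x = 0")
      case False
      then have "0 < g j x" using elim(2) f_nonneg[of x] by simp
      then show ?thesis using elim(1) by simp
    qed simp
  qed
  then have "(\<integral>x. f x * (h x - c)\<^sup>2 \<partial>lborel) = 0"
    by (rule integral_eq_zero_AE)
  then show False using pop_var_le[of c] assms by simp
qed


lemma sample_moments:
  assumes "j \<in> {1..n}" "1 \<le> i"
  shows "(\<lambda>\<omega>. h (X j i \<omega>)) \<in> borel_measurable M"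
    and "integrable M (\<lambda>\<omega>. (h (X j i \<omega>))\<^sup>2)"
    and "(\<integral>\<omega>. h (X j i \<omega>) \<partial>M) = stratum_mean j"
    and "(\<integral>\<omega>. (h (X j i \<omega>) - stratum_mean j)\<^sup>2 \<partial>M) = stratum_var j"
  using distributed_transform_moments[OF X_distr[OF assms] pros_density_nonneg[OF assms(1)] h_meas]
    integrable_pros_density_square[OF assms(1)]
  by (simp_all add: stratum_mean_def stratum_var_def)

lemma indep_sample: "indep_vars (\<lambda>_. borel) (\<lambda>(j, i) \<omega>. h (X j i \<omega>)) ({1..n} \<times> {1..})"
  using indep_vars_compose2[OF X_indep, of "\<lambda>_. h" "\<lambda>_. borel"] by (simp add: case_prod_beta')

definition cycle_total :: "nat \<Rightarrow> 'a \<Rightarrow> real"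
  where "cycle_total i \<omega> = (\<Sum>j=1..n. h (X j (Suc i) \<omega>))"

lemma cycle_total_measurable [measurable]: "cycle_total i \<in> borel_measurable M"
  unfolding cycle_total_def using sample_moments(1) by (intro borel_measurable_sum) auto

lemma cycle_total_indep: "indep_vars (\<lambda>_. borel) cycle_total UNIV"
proof -
  have "indep_vars (\<lambda>_. PiM {1..n} (\<lambda>_. borel))
      (\<lambda>i \<omega>. \<lambda>j\<in>{1..n}. (\<lambda>(j, i). X j i) (j, Suc i) \<omega>) UNIV"
    by (rule indep_vars_rows[OF X_indep]) auto
  then have "indep_vars (\<lambda>_. borel)
      (\<lambda>i \<omega>. \<Sum>j=1..n. h ((\<lambda>j\<in>{1..n}. (\<lambda>(j, i). X j i) (j, Suc i) \<omega>) j)) UNIV"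
    by (rule indep_vars_compose2) measurable
  then show ?thesis
    by (simp add: cycle_total_def[abs_def])
qed

lemma cycle_total_distr:
  "distr M borel (cycle_total i)
    = distr (PiM {1..n} (\<lambda>j. density lborel (g j))) borel (\<lambda>v. \<Sum>j=1..n. h (v j))"
proof -
  define row where "row \<omega> = (\<lambda>j\<in>{1..n}. (\<lambda>(j, i). X j i) (j, Suc i) \<omega>)" for \<omega>
  have row_meas: "row \<in> M \<rightarrow>\<^sub>M PiM {1..n} (\<lambda>_. borel)"
    using indep_vars_rows[OF X_indep, of Suc UNIV] unfolding row_def indep_vars_def by auto
  have X_law: "distr M borel (X j (Suc i)) = density lborel (g j)" if "j \<in> {1..n}" for j
    using distributed_distr_eq_density[OF X_distr[OF that]]
    by (subst distr_cong[of _ _ _ lborel]) auto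
  have "distr M (PiM {1..n} (\<lambda>_. borel)) row = PiM {1..n} (\<lambda>j. distr M borel (X j (Suc i)))"
    unfolding row_def using distr_row_eq_PiM[OF X_indep] n_pos by simp
  also have "\<dots> = PiM {1..n} (\<lambda>j. density lborel (g j))"
    by (rule PiM_cong) (auto simp: X_law)
  finally have "distr M borel (\<lambda>\<omega>. \<Sum>j=1..n. h (row \<omega> j))
      = distr (PiM {1..n} (\<lambda>j. density lborel (g j))) borel (\<lambda>v. \<Sum>j=1..n. h (v j))"
    using distr_distr[of "\<lambda>v. \<Sum>j=1..n. h (v j)" "PiM {1..n} (\<lambda>_. borel)" borel row M, symmetric] row_meas
    by (simp add: comp_def)
  moreover have "cycle_total i = (\<lambda>\<omega>. \<Sum>j=1..n. h (row \<omega> j))"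
    by (simp add: fun_eq_iff cycle_total_def row_def)
  ultimately show ?thesis by simp
qed

lemma cycle_total_moments:
  shows "integrable M (\<lambda>\<omega>. (cycle_total i \<omega>)\<^sup>2)"
    and "(\<integral>\<omega>. cycle_total i \<omega> \<partial>M) = real n * pop_mean"
    and "(\<integral>\<omega>. (cycle_total i \<omega> - real n * pop_mean)\<^sup>2 \<partial>M) = cycle_var"
proof -
  let ?W = "\<lambda>j \<omega>. h (X j (Suc i) \<omega>)"
  have meas: "?W j \<in> borel_measurable M" and sq: "integrable M (\<lambda>\<omega>. (?W j \<omega>)\<^sup>2)"
    and mean: "(\<integral>\<omega>. ?W j \<omega> \<partial>M) = stratum_mean j"
    and var: "(\<integral>\<omega>. (?W j \<omega> - stratum_mean j)\<^sup>2 \<partial>M) = stratum_var j"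
    if "j \<in> {1..n}" for j
    using sample_moments[OF that] by simp_all
  have int: "integrable M (?W j)" if "j \<in> {1..n}" for j
    using square_integrable_imp_integrable[OF meas sq, OF that that] .
  show "integrable M (\<lambda>\<omega>. (cycle_total i \<omega>)\<^sup>2)"
    unfolding cycle_total_def by (rule integrable_square_sum[OF meas sq])
  have sum_mean: "(\<Sum>j=1..n. \<integral>\<omega>. ?W j \<omega> \<partial>M) = real n * pop_mean"
    using mean sum_stratum_mean by simp
  then show "(\<integral>\<omega>. cycle_total i \<omega> \<partial>M) = real n * pop_mean"
    unfolding cycle_total_def using int by simp
  have "(\<integral>\<omega>. ((\<Sum>j=1..n. ?W j \<omega>) - (\<Sum>j=1..n. \<integral>\<omega>. ?W j \<omega> \<partial>M))\<^sup>2 \<partial>M)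
      = (\<Sum>j=1..n. \<integral>\<omega>. (?W j \<omega> - (\<integral>\<omega>. ?W j \<omega> \<partial>M))\<^sup>2 \<partial>M)"
  proof (rule variance_sum_uncorrelated[OF _ meas sq])
    fix a b assume "a \<in> {1..n}" "b \<in> {1..n}" "a \<noteq> b"
    then show "(\<integral>\<omega>. ?W a \<omega> * ?W b \<omega> \<partial>M) = (\<integral>\<omega>. ?W a \<omega> \<partial>M) * (\<integral>\<omega>. ?W b \<omega> \<partial>M)"
      using indep_vars_integral_mult[OF indep_sample, of "(a, Suc i)" "(b, Suc i)"] int by simp
  qed simp
  also have "\<dots> = cycle_var"
    unfolding cycle_var_def using mean var by simp
  finally show "(\<integral>\<omega>. (cycle_total i \<omega> - real n * pop_mean)\<^sup>2 \<partial>M) = cycle_var"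
    unfolding sum_mean cycle_total_def .
qed


lemma pros_est_cycle_average: "pros_est n h X L = (\<lambda>\<omega>. (\<Sum>i<L. cycle_total i \<omega>) / real (n * L))"
  unfolding pros_est_def cycle_total_def by (simp add: sum.atLeast1_atMost_eq)

lemma cycle_total_integrable: "integrable M (cycle_total i)"
  using square_integrable_imp_integrable[OF cycle_total_measurable cycle_total_moments(1)] .

lemma pros_est_mean: "1 \<le> L \<Longrightarrow> rv_mean M (pros_est n h X L) = pop_mean"
  unfolding pros_est_cycle_average using n_pos
  by (simp add: rv_mean_scaled_sum cycle_total_integrable cycle_total_moments(2))

lemma pros_est_var: "rv_var M (pros_est n h X L) = real L * cycle_var / (real (n * L))\<^sup>2"
proof -
  have "rv_var M (pros_est n h X L)
      = (\<Sum>i<L. \<integral>\<omega>. (cycle_total i \<omega> - (\<integral>\<omega>. cycle_total i \<omega> \<partial>M))\<^sup>2 \<partial>M) / (real (n * L))\<^sup>2"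
    unfolding pros_est_cycle_average
    using indep_vars_integral_mult[OF cycle_total_indep] cycle_total_integrable
    by (intro rv_var_scaled_sum_uncorrelated cycle_total_moments(1)) auto
  then show ?thesis
    by (simp add: cycle_total_moments(2,3))
qed

lemma srs_var:
  fixes M' :: "'b measure" and Y :: "nat \<Rightarrow> 'b \<Rightarrow> real"
  assumes "prob_space M'" and indep: "prob_space.indep_vars M' (\<lambda>_. borel) Y {1..N}"
    and Y_distr: "\<And>k. k \<in> {1..N} \<Longrightarrow> distributed M' lborel (Y k) (\<lambda>x. ennreal (f x))"
  shows "rv_var M' (\<lambda>\<omega>. (\<Sum>k=1..N. h (Y k \<omega>)) / c) = real N * pop_var / c\<^sup>2"
proof -
  interpret M': prob_space M' by fact
  note moments = M'.distributed_transform_moments[OF Y_distr f_nonneg h_meas]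
  have int: "integrable M' (\<lambda>\<omega>. h (Y k \<omega>))" if "k \<in> {1..N}" for k
    using M'.square_integrable_imp_integrable[OF moments(2)[OF that] moments(3)[OF that h_mom]] .
  have indep_h: "M'.indep_vars (\<lambda>_. borel) (\<lambda>k \<omega>. h (Y k \<omega>)) {1..N}"
    by (rule M'.indep_vars_compose2[OF indep]) simp
  have "rv_var M' (\<lambda>\<omega>. (\<Sum>k=1..N. h (Y k \<omega>)) / c)
      = (\<Sum>k=1..N. \<integral>\<omega>. (h (Y k \<omega>) - (\<integral>\<omega>. h (Y k \<omega>) \<partial>M'))\<^sup>2 \<partial>M') / c\<^sup>2"
    using M'.indep_vars_integral_mult[OF indep_h] int moments(2) moments(3)[OF _ h_mom]
    by (intro M'.rv_var_scaled_sum_uncorrelated) auto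
  also have "\<dots> = real N * pop_var / c\<^sup>2"
    using moments(4,5) by (simp add: pop_mean_def[symmetric] pop_var_def)
  finally show ?thesis .
qed

lemma pros_est_var_le_srs:
  fixes M' :: "'b measure" and Y :: "nat \<Rightarrow> 'b \<Rightarrow> real"
  assumes "prob_space M'" "prob_space.indep_vars M' (\<lambda>_. borel) Y {1..n * L}"
    and "\<And>k. k \<in> {1..n * L} \<Longrightarrow> distributed M' lborel (Y k) (\<lambda>x. ennreal (f x))"
  shows "rv_var M (pros_est n h X L) \<le> rv_var M' (\<lambda>\<omega>. (\<Sum>k=1..n * L. h (Y k \<omega>)) / real (n * L))"
proof -
  have "real L * cycle_var \<le> real (n * L) * pop_var"
    using mult_left_mono[OF cycle_var_le, of "real L"] by (simp add: mult.assoc mult.left_commute)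
  then have "real L * cycle_var / (real (n * L))\<^sup>2 \<le> real (n * L) * pop_var / (real (n * L))\<^sup>2"
    by (rule divide_right_mono) simp
  then show ?thesis
    by (simp only: pros_est_var srs_var[OF assms])
qed

lemma pros_est_asymptotically_normal:
  assumes "0 < pop_var"
  shows "weak_conv_m (\<lambda>L. distr M borel
      (\<lambda>\<omega>. (pros_est n h X L \<omega> - pop_mean) / sqrt (rv_var M (pros_est n h X L))))
    std_normal_distribution"
proof -
  have var_pos: "0 < cycle_var" using cycle_var_pos[OF assms] .
  have "weak_conv_m (\<lambda>L. distr M borel
      (\<lambda>\<omega>. (\<Sum>i<L. cycle_total i \<omega> - real n * pop_mean) / sqrt (real L * (sqrt cycle_var)\<^sup>2)))
    std_normal_distribution"
    using var_pos cycle_total_moments cycle_total_distr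
    by (intro central_limit_theorem[OF cycle_total_indep]) auto
  moreover have "(pros_est n h X L \<omega> - pop_mean) / sqrt (rv_var M (pros_est n h X L))
      = (\<Sum>i<L. cycle_total i \<omega> - real n * pop_mean) / sqrt (real L * (sqrt cycle_var)\<^sup>2)" for L \<omega>
  proof (cases "L = 0")
    case False
    then have "(pros_est n h X L \<omega> - pop_mean) = (\<Sum>i<L. cycle_total i \<omega> - real n * pop_mean) / real (n * L)"
      using n_pos by (simp add: pros_est_cycle_average sum_subtractf field_simps)
    moreover have "sqrt (rv_var M (pros_est n h X L)) = sqrt (real L * cycle_var) / real (n * L)"
      by (simp add: pros_est_var real_sqrt_divide)
    ultimately show ?thesis
      using False n_pos var_pos by simp
  qed (simp add: pros_est_def pros_est_var)
  ultimately show ?thesis by simp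
qed

lemma pros_est_strongly_consistent: "AE \<omega> in M. (\<lambda>L. pros_est n h X L \<omega>) \<longlonglongrightarrow> pop_mean"
proof -
  have "AE \<omega> in M. (\<lambda>L. (\<Sum>i<L. cycle_total i \<omega>) / real L) \<longlonglongrightarrow> real n * pop_mean"
    by (rule strong_law_indep[OF cycle_total_indep cycle_total_moments(1,2), where C = cycle_var])
       (simp add: cycle_total_moments(3))
  then show ?thesis
  proof eventually_elim
    case (elim \<omega>)
    then have "(\<lambda>L. (\<Sum>i<L. cycle_total i \<omega>) / real L / real n) \<longlonglongrightarrow> real n * pop_mean / real n"
      by (rule tendsto_divide) (use n_pos in auto)
    then show ?case
      using n_pos by (simp add: pros_est_cycle_average mult.commute)
  qed
qed

end

theorem theorem2p1:
  fixes f h :: "real \<Rightarrow> real"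
    and s n :: nat
    and \<alpha> :: "nat \<Rightarrow> nat \<Rightarrow> real"
    and M :: "'a measure"
    and X :: "nat \<Rightarrow> nat \<Rightarrow> 'a \<Rightarrow> real"
  assumes f_meas: "f \<in> borel_measurable lborel"
    and f_nonneg: "\<And>x. 0 \<le> f x"
    and f_int: "(\<integral>\<^sup>+ x. ennreal (f x) \<partial>lborel) = 1"
    and n_pos: "1 \<le> n" and s_pos: "1 \<le> s" and n_dvd: "n dvd s"
    and alpha: "doubly_stochastic n \<alpha>"
    and h_meas: "h \<in> borel_measurable borel"
    and h_mom: "integrable lborel (\<lambda>x. f x * (h x)\<^sup>2)"
    and M: "prob_space M"
    and X_indep: "prob_space.indep_vars M (\<lambda>_. borel) (\<lambda>(j, i). X j i) ({1..n} \<times> {1..})"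
    and X_distr: "\<And>j i. j \<in> {1..n} \<Longrightarrow> 1 \<le> i \<Longrightarrow>
                    distributed M lborel (X j i) (\<lambda>x. ennreal (pros_density f s n \<alpha> j x))"
  shows
    "(\<forall>L\<ge>1. rv_mean M (pros_est n h X L) = (\<integral>x. f x * h x \<partial>lborel))
     \<and> (\<forall>L\<ge>1. \<forall>(M' :: 'b measure) (Y :: nat \<Rightarrow> 'b \<Rightarrow> real).
          prob_space M' \<and> prob_space.indep_vars M' (\<lambda>_. borel) Y {1..n * L} \<and>
          (\<forall>k\<in>{1..n * L}. distributed M' lborel (Y k) (\<lambda>x. ennreal (f x)))
          \<longrightarrow> rv_var M (pros_est n h X L)
              \<le> rv_var M' (\<lambda>\<omega>. (\<Sum>k=1..n * L. h (Y k \<omega>)) / real (n * L)))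
     \<and> (0 < (\<integral>x. f x * (h x - (\<integral>y. f y * h y \<partial>lborel))\<^sup>2 \<partial>lborel) \<longrightarrow>
          weak_conv_m
            (\<lambda>L. distr M borel (\<lambda>\<omega>. (pros_est n h X L \<omega> - (\<integral>x. f x * h x \<partial>lborel))
                                       / sqrt (rv_var M (pros_est n h X L))))
            std_normal_distribution)
     \<and> (AE \<omega> in M. (\<lambda>L. pros_est n h X L \<omega>) \<longlonglongrightarrow> (\<integral>x. f x * h x \<partial>lborel))"
proof -
  interpret pros_sample f s n \<alpha> M h X
  proof (rule pros_sample.intro)
    show "pros_design f s n \<alpha>"
      by unfold_locales (fact assms)+
    show "pros_sample_axioms f s n \<alpha> M h X"
      by (rule pros_sample_axioms.intro) (fact assms)+
  qed (fact M)
  show ?thesis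
    using pros_est_mean pros_est_var_le_srs pros_est_asymptotically_normal pros_est_strongly_consistent
    unfolding pop_mean_def pop_var_def by blast
qed

end
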